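(* There exist a constant $c_0\in(0,1)$ and a nonadaptive $t$-online-corruption-resilient $\varepsilon$-tester for linearity of functions $f:\{0,1\}^d\to\{0,1\}$ that is correct whenever $t\le c_0\cdot\varepsilon^{5/4}\cdot 2^{d/4}$ and makes $O\big(\frac1\varepsilon\log\frac t\varepsilon\big)$ queries.
   Context: An algorithm accesses an input function $f:D\to R$ ($D$ finite) only through an oracle $\mathcal{O}$, querying points one at a time and receiving $\mathcal{O}(x)$; initially $\mathcal{O}(x)=f(x)$ for all $x$. A $t$-online-corruption oracle, after answering each query, may replace $\mathcal{O}(x)$ at up to $t$ points $x$ by arbitrary values in the range of $f$; modified values are used for all future queries. Its choices (adversarial strategy) may depend on $f$, the queries and answers so far, and the algorithm's code, but not on the algorithm's future random coins. $f$ is $\varepsilon$-far from a property $\mathcal{P}$ (a set of functions) if it differs from every $g\in\mathcal{P}$ on at least an $\varepsilon$ fraction of $D$. A $t$-online-corruption-resilient $\varepsilon$-tester for $\mathcal{P}$ is a randomized algorithm that, with access to $f$ via a $t$-online-corruption oracle and for every adversarial strategy, accepts with probability at least $2/3$ if $f\in\mathcal{P}$ and rejects with probability at least $2/3$ if $f$ is $\varepsilon$-far from $\mathcal{P}$. Nonadaptive means queries do not depend on previous answers. $f:\{0,1\}^d\to\{0,1\}$ is linear if there is $S\subseteq[d]$ with $f(x)=\sum_{i\in S}x[i]\bmod 2$ for all $x$. *)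

theory Defs
  imports "HOL-Probability.Probability"
begin

definition cube :: "nat \<Rightarrow> bool list set" where
  "cube d = {x. length x = d}"

definition linear_fn :: "nat \<Rightarrow> (bool list \<Rightarrow> bool) \<Rightarrow> bool" where
  "linear_fn d f \<longleftrightarrow> (\<exists>S \<subseteq> {..<d}. \<forall>x \<in> cube d.
      (if f x then 1 else 0) = (\<Sum>i\<in>S. (if x ! i then 1 else 0 :: nat)) mod 2)"

definition eps_far_linear :: "nat \<Rightarrow> real \<Rightarrow> (bool list \<Rightarrow> bool) \<Rightarrow> bool" where
  "eps_far_linear d \<epsilon> f \<longleftrightarrow> (\<forall>g. linear_fn d g \<longrightarrow>
      real (card {x \<in> cube d. f x \<noteq> g x}) \<ge> \<epsilon> * 2 ^ d)"

text \<open>An adversarial strategy maps the history of (query, answer) pairs so far and the current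
  oracle to the next oracle; it is admissible (t-online-corruption) if every step changes the
  oracle on at most t points of the domain.\<close>
type_synonym adversary =
  "(bool list \<times> bool) list \<Rightarrow> (bool list \<Rightarrow> bool) \<Rightarrow> (bool list \<Rightarrow> bool)"

definition valid_adversary :: "nat \<Rightarrow> nat \<Rightarrow> adversary \<Rightarrow> bool" where
  "valid_adversary d t adv \<longleftrightarrow>
     (\<forall>h Or. card {x \<in> cube d. adv h Or x \<noteq> Or x} \<le> t)"

fun run_oracle :: "adversary \<Rightarrow> (bool list \<Rightarrow> bool) \<Rightarrow> (bool list \<times> bool) list
                    \<Rightarrow> bool list list \<Rightarrow> bool list" where
  "run_oracle adv Or hist [] = []"
| "run_oracle adv Or hist (q # qs) =
     (let a = Or q; h' = hist @ [(q, a)] in a # run_oracle adv (adv h' Or) h' qs)"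

text \<open>A nonadaptive tester is a distribution over pairs (query sequence, decision rule on the
  answers); all randomness is drawn upfront, the adversary only sees queries/answers so far.\<close>
definition accept_prob ::
  "(bool list list \<times> (bool list \<Rightarrow> bool)) pmf \<Rightarrow> adversary \<Rightarrow> (bool list \<Rightarrow> bool) \<Rightarrow> real" where
  "accept_prob T adv f =
     measure_pmf.prob T {(qs, dec). dec (run_oracle adv f [] qs)}"

end

theory Submission
  imports Defs
begin

text \<open>
  The tester runs m = \<lceil>12/\<epsilon>\<rceil> independent blocks. A block draws k + 1 uniform points and a
  uniform S \<in> {0,1}^k, and checks f at the XOR of the points selected by the even-weight mask
  (parity S) # S against the XOR of their values. For S \<noteq> 0 this is a check on an even number
  w \<ge> 2 of points; it passes with probability (1 + \<Sum>a F(a)^(w+1)) / 2 in terms of the Fourier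
  coefficients F(a) of (-1)^f, and as F(a) \<le> 1 - 2\<epsilon> for \<epsilon>-far f, Parseval bounds this by
  1 - \<epsilon>/2. Hence a block passes with probability at most 1 - \<epsilon>/4.

  Against the adversary: if no query reads a corrupted value, the tester sees f itself. At any time
  at most t Q points are corrupted, Q the number of queries. Each uniform point hits one with
  probability at most t Q / 2^d; the masked sum takes any given value for at most as many masks as
  lie in the kernel of S \<mapsto> masked sum, whose expected size is at most 1 + 2^k / 2^d, so it hits
  with probability at most t Q (1/2^d + 1/2^k). With 2^k of order t / \<epsilon>^2 (times logarithms)
  the total is at most 1/6 whenever t \<le> c0 \<epsilon>^(5/4) 2^(d/4).
\<close>

definition tuples :: "'a set \<Rightarrow> nat \<Rightarrow> 'a list set" where
  "tuples A n = {xs. set xs \<subseteq> A \<and> length xs = n}"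

lemma tuples_0 [simp]: "tuples A 0 = {[]}"
  by (auto simp: tuples_def)

lemma tuples_Suc: "tuples A (Suc n) = (\<lambda>(x, xs). x # xs) ` (A \<times> tuples A n)"
  by (auto simp: tuples_def length_Suc_conv image_iff)

lemma finite_tuples [simp]: "finite A \<Longrightarrow> finite (tuples A n)"
  unfolding tuples_def by (rule finite_lists_length_eq)

lemma card_tuples: "finite A \<Longrightarrow> card (tuples A n) = card A ^ n"
  unfolding tuples_def by (rule card_lists_length_eq)

lemma tuples_nonempty: "A \<noteq> {} \<Longrightarrow> tuples A n \<noteq> {}"
  by (induction n) (auto simp: tuples_Suc)

lemma sum_tuples_Suc:
  assumes "finite A"
  shows "(\<Sum>xs\<in>tuples A (Suc n). g xs) = (\<Sum>x\<in>A. \<Sum>xs\<in>tuples A n. g (x # xs))"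
proof -
  have "inj_on (\<lambda>(x, xs). x # xs) (A \<times> tuples A n)"
    by (auto simp: inj_on_def)
  then have "(\<Sum>xs\<in>tuples A (Suc n). g xs) = (\<Sum>(x, xs)\<in>A \<times> tuples A n. g (x # xs))"
    unfolding tuples_Suc by (simp add: sum.reindex split_def)
  then show ?thesis
    by (simp add: sum.cartesian_product)
qed

lemma sum_of_bool_card: "finite A \<Longrightarrow> (\<Sum>x\<in>A. of_bool (P x)) = real (card {x\<in>A. P x})"
  by (simp add: Int_def conj_commute)

lemma cube_eq_tuples: "cube d = tuples UNIV d"
  by (auto simp: cube_def tuples_def)

lemma finite_cube [simp]: "finite (cube d)"
  by (simp add: cube_eq_tuples)

lemma card_cube: "card (cube d) = 2 ^ d"
  by (simp add: cube_eq_tuples card_tuples)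

lemma sum_cube_Suc:
  "(\<Sum>x\<in>cube (Suc d). g x) = (\<Sum>x\<in>cube d. g (True # x)) + (\<Sum>x\<in>cube d. g (False # x))"
  unfolding cube_eq_tuples by (simp add: sum_tuples_Suc UNIV_bool add.commute)

fun xor_vec :: "bool list \<Rightarrow> bool list \<Rightarrow> bool list" where
  "xor_vec (a # as) (b # bs) = (a \<noteq> b) # xor_vec as bs"
| "xor_vec _ _ = []"

fun dot_mod2 :: "bool list \<Rightarrow> bool list \<Rightarrow> bool" where
  "dot_mod2 (a # as) (b # bs) = ((a \<and> b) \<noteq> dot_mod2 as bs)"
| "dot_mod2 _ _ = False"

definition zero_vec :: "nat \<Rightarrow> bool list" where
  "zero_vec d = replicate d False"

lemma length_xor_vec [simp]: "length (xor_vec a b) = min (length a) (length b)"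
  by (induction a b rule: xor_vec.induct) auto

lemma nth_xor_vec: "i < length a \<Longrightarrow> i < length b \<Longrightarrow> xor_vec a b ! i = (a ! i \<noteq> b ! i)"
  by (induction a b arbitrary: i rule: xor_vec.induct) (auto simp: nth_Cons split: nat.split)

lemma length_zero_vec [simp]: "length (zero_vec d) = d"
  by (simp add: zero_vec_def)

lemma zero_vec_in_cube [simp]: "zero_vec d \<in> cube d"
  by (simp add: cube_def)

lemma xor_vec_in_cube: "x \<in> cube d \<Longrightarrow> y \<in> cube d \<Longrightarrow> xor_vec x y \<in> cube d"
  by (simp add: cube_def)

lemma xor_vec_self: "xor_vec a a = zero_vec (length a)"
  by (induction a) (auto simp: zero_vec_def)

lemma xor_vec_zero_vec: "length a = d \<Longrightarrow> xor_vec a (zero_vec d) = a"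
  by (induction a arbitrary: d) (auto simp: zero_vec_def)

lemma xor_vec_xor_vec_cancel: "length z = length y \<Longrightarrow> xor_vec (xor_vec z y) y = z"
  by (auto simp: list_eq_iff_nth_eq nth_xor_vec)

lemma xor_vec_xor_vec_cancel_left: "length x = length s \<Longrightarrow> xor_vec x (xor_vec s x) = s"
  by (auto simp: list_eq_iff_nth_eq nth_xor_vec)

lemma dot_mod2_xor_vec:
  "length a = length b \<Longrightarrow> dot_mod2 c (xor_vec a b) = (dot_mod2 c a \<noteq> dot_mod2 c b)"
proof (induction a b arbitrary: c rule: xor_vec.induct)
  case (1 a as b bs c)
  then show ?case by (cases c) auto
qed auto

lemma dot_mod2_commute: "dot_mod2 a b = dot_mod2 b a"
  by (induction a b rule: dot_mod2.induct) auto

lemma dot_mod2_eq_odd_sum: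
  "length x = length a \<Longrightarrow> dot_mod2 a x = odd (\<Sum>i<length a. of_bool (a ! i \<and> x ! i) :: nat)"
proof (induction a arbitrary: x)
  case (Cons b a)
  then obtain c x' where "x = c # x'" "length x' = length a"
    by (cases x) auto
  with Cons.IH show ?case
    by (simp only: length_Cons sum.lessThan_Suc_shift nth_Cons_0 nth_Cons_Suc) auto
qed simp

fun masked_sum :: "nat \<Rightarrow> bool list \<Rightarrow> bool list list \<Rightarrow> bool list" where
  "masked_sum d (b # M) (x # xs) = (if b then xor_vec x (masked_sum d M xs) else masked_sum d M xs)"
| "masked_sum d _ _ = zero_vec d"

lemma length_masked_sum: "set xs \<subseteq> cube d \<Longrightarrow> length (masked_sum d M xs) = d"
  by (induction d M xs rule: masked_sum.induct) (auto simp: cube_def)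

lemma masked_sum_in_cube: "set xs \<subseteq> cube d \<Longrightarrow> masked_sum d M xs \<in> cube d"
  using length_masked_sum by (simp add: cube_def)

lemma masked_sum_replicate_False: "masked_sum d (replicate n False) xs = zero_vec d"
  by (induction n arbitrary: xs) (auto, case_tac xs, auto)

lemma masked_sum_xor_vec:
  assumes "set xs \<subseteq> cube d" "length M = length xs" "length M' = length xs"
  shows "masked_sum d (xor_vec M M') xs = xor_vec (masked_sum d M xs) (masked_sum d M' xs)"
  using assms
proof (induction xs arbitrary: M M')
  case Nil
  then show ?case by (simp add: xor_vec_self[of "zero_vec d", simplified])
next
  case (Cons x xs)
  then obtain b M1 b' M1' where M: "M = b # M1" "M' = b' # M1'"
    by (cases M; cases M') auto
  have IH: "masked_sum d (xor_vec M1 M1') xs = xor_vec (masked_sum d M1 xs) (masked_sum d M1' xs)"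
    using Cons M by auto
  have "length x = d" "length (masked_sum d M1 xs) = d" "length (masked_sum d M1' xs) = d"
    using Cons.prems length_masked_sum by (auto simp: cube_def)
  with IH show ?case
    unfolding M by (cases b; cases b') (auto simp: list_eq_iff_nth_eq nth_xor_vec)
qed

definition character :: "bool list \<Rightarrow> bool list \<Rightarrow> real" where
  "character a x = (if dot_mod2 a x then -1 else 1)"

definition signed :: "(bool list \<Rightarrow> bool) \<Rightarrow> bool list \<Rightarrow> real" where
  "signed f x = (if f x then -1 else 1)"

definition fourier :: "nat \<Rightarrow> (bool list \<Rightarrow> real) \<Rightarrow> bool list \<Rightarrow> real" where
  "fourier d G a = (\<Sum>x\<in>cube d. G x * character a x) / 2 ^ d"

definition convolve :: "nat \<Rightarrow> (bool list \<Rightarrow> real) \<Rightarrow> (bool list \<Rightarrow> real) \<Rightarrow> bool list \<Rightarrow> real" where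
  "convolve d G F s = (\<Sum>x\<in>cube d. G (xor_vec x s) * F x) / 2 ^ d"

definition weight :: "bool list \<Rightarrow> nat" where
  "weight M = length (filter id M)"

lemma character_Cons: "character (a # as) (b # bs) = (if a \<and> b then -1 else 1) * character as bs"
  by (simp add: character_def)

lemma character_commute: "character a x = character x a"
  by (simp add: character_def dot_mod2_commute)

lemma character_xor_vec:
  "length x = length y \<Longrightarrow> character a (xor_vec x y) = character a x * character a y"
  by (simp add: character_def dot_mod2_xor_vec)

lemma sum_character:
  "a \<in> cube d \<Longrightarrow> (\<Sum>x\<in>cube d. character a x) = (if a = zero_vec d then 2 ^ d else 0)"
proof (induction d arbitrary: a)
  case 0
  then show ?case by (simp add: cube_def zero_vec_def character_def)
next
  case (Suc d)
  then obtain b a' where a: "a = b # a'" "a' \<in> cube d"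
    by (cases a) (auto simp: cube_def)
  have "zero_vec (Suc d) = False # zero_vec d"
    by (simp add: zero_vec_def)
  with a Suc.IH[OF a(2)] show ?case
    by (cases b) (simp_all add: sum_cube_Suc character_Cons sum_negf)
qed

lemma sum_character_dual:
  "x \<in> cube d \<Longrightarrow> (\<Sum>a\<in>cube d. character a x) = (if x = zero_vec d then 2 ^ d else 0)"
  by (subst character_commute) (rule sum_character)

lemma sum_cube_translate:
  assumes "y \<in> cube d"
  shows "(\<Sum>z\<in>cube d. h (xor_vec z y)) = (\<Sum>z\<in>cube d. h z)"
  by (rule sum.reindex_bij_witness[where i="\<lambda>z. xor_vec z y" and j="\<lambda>z. xor_vec z y"])
     (use assms in \<open>auto simp: cube_def xor_vec_xor_vec_cancel\<close>)

lemma sum_fourier: "(\<Sum>a\<in>cube d. fourier d G a) = G (zero_vec d)"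
proof -
  have "(\<Sum>a\<in>cube d. \<Sum>x\<in>cube d. G x * character a x) = (\<Sum>x\<in>cube d. \<Sum>a\<in>cube d. G x * character a x)"
    by (rule sum.swap)
  also have "\<dots> = (\<Sum>x\<in>cube d. if x = zero_vec d then G x * 2 ^ d else 0)"
    by (rule sum.cong) (auto simp: sum_character_dual sum_distrib_left[symmetric])
  finally show ?thesis
    unfolding fourier_def by (simp add: sum_divide_distrib[symmetric])
qed

lemma fourier_convolve: "fourier d (convolve d G F) a = fourier d G a * fourier d F a"
proof -
  have shift: "(\<Sum>s\<in>cube d. G (xor_vec x s) * character a s) = character a x * (\<Sum>s\<in>cube d. G s * character a s)"
    if x: "x \<in> cube d" for x
  proof -
    have "(\<Sum>s\<in>cube d. G (xor_vec x s) * character a s)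
        = (\<Sum>s\<in>cube d. G (xor_vec x (xor_vec s x)) * character a (xor_vec s x))"
      by (rule sum_cube_translate[OF x, symmetric])
    also have "\<dots> = (\<Sum>s\<in>cube d. character a x * (G s * character a s))"
      by (rule sum.cong) (use x in \<open>auto simp: cube_def xor_vec_xor_vec_cancel_left character_xor_vec\<close>)
    finally show ?thesis by (simp add: sum_distrib_left)
  qed
  have "(\<Sum>s\<in>cube d. (\<Sum>x\<in>cube d. G (xor_vec x s) * F x) * character a s)
      = (\<Sum>s\<in>cube d. \<Sum>x\<in>cube d. F x * (G (xor_vec x s) * character a s))"
    by (simp add: sum_distrib_right sum_distrib_left mult_ac)
  also have "\<dots> = (\<Sum>x\<in>cube d. F x * (\<Sum>s\<in>cube d. G (xor_vec x s) * character a s))"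
    by (subst sum.swap) (simp add: sum_distrib_left)
  also have "\<dots> = (\<Sum>x\<in>cube d. F x * character a x * (\<Sum>s\<in>cube d. G s * character a s))"
    by (intro sum.cong refl) (simp add: shift)
  also have "\<dots> = (\<Sum>x\<in>cube d. F x * character a x) * (\<Sum>s\<in>cube d. G s * character a s)"
    by (rule sum_distrib_right[symmetric])
  finally show ?thesis
    unfolding fourier_def convolve_def by (simp add: sum_divide_distrib[symmetric] mult_ac)
qed

definition correlation :: "nat \<Rightarrow> (bool list \<Rightarrow> real) \<Rightarrow> bool list \<Rightarrow> (bool list \<Rightarrow> bool) \<Rightarrow> real" where
  "correlation d G M f =
     (\<Sum>xs\<in>tuples (cube d) (length M). G (masked_sum d M xs) * character M (map f xs))"

lemma correlation_Cons_False: "correlation d G (False # M) f = 2 ^ d * correlation d G M f"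
  by (simp add: correlation_def sum_tuples_Suc character_Cons card_cube)

lemma correlation_Cons_True:
  "correlation d G (True # M) f = 2 ^ d * correlation d (convolve d G (signed f)) M f"
proof -
  have "correlation d G (True # M) f
      = (\<Sum>x\<in>cube d. \<Sum>xs\<in>tuples (cube d) (length M).
           G (xor_vec x (masked_sum d M xs)) * (signed f x * character M (map f xs)))"
    by (simp add: correlation_def sum_tuples_Suc character_Cons signed_def)
  also have "\<dots> = (\<Sum>xs\<in>tuples (cube d) (length M).
      (\<Sum>x\<in>cube d. G (xor_vec x (masked_sum d M xs)) * signed f x) * character M (map f xs))"
    by (subst sum.swap) (simp add: sum_distrib_right mult.assoc)
  finally show ?thesis
    by (simp add: correlation_def convolve_def sum_distrib_left)
qed

lemma correlation_fourier:
  "correlation d G M f = 2 ^ (d * length M) * (\<Sum>a\<in>cube d. fourier d G a * fourier d (signed f) a ^ weight M)"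
proof (induction M arbitrary: G)
  case Nil
  then show ?case by (simp add: correlation_def character_def weight_def sum_fourier)
next
  case (Cons b M)
  then show ?case
    by (cases b) (simp_all add: correlation_Cons_True correlation_Cons_False fourier_convolve
        weight_def power_add mult_ac)
qed

lemma parseval: "(\<Sum>a\<in>cube d. fourier d (signed f) a ^ 2) = 1"
proof -
  have "correlation d (signed f) [True] f
      = (\<Sum>x\<in>cube d. signed f (xor_vec x (zero_vec d)) * character [True] [f x])"
    by (simp add: correlation_def sum_tuples_Suc)
  also have "\<dots> = (\<Sum>x\<in>cube d. 1)"
    by (intro sum.cong refl) (auto simp: signed_def character_def cube_def xor_vec_zero_vec)
  finally show ?thesis
    by (simp add: correlation_fourier weight_def power2_eq_square card_cube)
qed

lemma abs_fourier_signed_le_1: "a \<in> cube d \<Longrightarrow> \<bar>fourier d (signed f) a\<bar> \<le> 1"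
proof -
  assume "a \<in> cube d"
  then have "fourier d (signed f) a ^ 2 \<le> (\<Sum>a\<in>cube d. fourier d (signed f) a ^ 2)"
    by (intro member_le_sum) auto
  then show ?thesis
    by (simp add: parseval abs_square_le_1)
qed

lemma dot_mod2_zero_vec [simp]: "dot_mod2 a (zero_vec d) = False"
proof (induction d arbitrary: a)
  case (Suc d)
  then show ?case by (cases a) (auto simp: zero_vec_def)
qed (simp add: zero_vec_def)

lemma dot_mod2_masked_sum:
  "set xs \<subseteq> cube d \<Longrightarrow> length M = length xs \<Longrightarrow>
     dot_mod2 a (masked_sum d M xs) = dot_mod2 M (map (dot_mod2 a) xs)"
proof (induction M arbitrary: xs)
  case (Cons b M)
  then obtain x xs' where "xs = x # xs'"
    by (cases xs) auto
  with Cons show ?case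
    by (auto simp: dot_mod2_xor_vec length_masked_sum cube_def)
qed simp

lemma dot_mod2_eq_odd_sum_support:
  assumes "a \<in> cube d" "x \<in> cube d"
  shows "dot_mod2 a x = odd (\<Sum>i\<in>{i. i < d \<and> a ! i}. if x ! i then 1 else 0 :: nat)"
proof -
  have "{i. i < d \<and> a ! i \<and> x ! i} = {..<d} \<inter> {i. a ! i \<and> x ! i}"
    by auto
  then have "(\<Sum>i\<in>{i. i < d \<and> a ! i}. if x ! i then 1 else 0 :: nat) = (\<Sum>i<d. of_bool (a ! i \<and> x ! i))"
    by (subst sum.inter_filter[symmetric]) (auto intro!: sum.cong)
  with assms show ?thesis
    by (simp add: dot_mod2_eq_odd_sum cube_def)
qed

lemma linear_fn_iff_dot_mod2:
  "linear_fn d f \<longleftrightarrow> (\<exists>a\<in>cube d. \<forall>x\<in>cube d. f x = dot_mod2 a x)"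
proof
  assume "linear_fn d f"
  then obtain S where S: "S \<subseteq> {..<d}"
    and f: "\<forall>x\<in>cube d. (if f x then 1 else 0) = (\<Sum>i\<in>S. if x ! i then 1 else 0 :: nat) mod 2"
    unfolding linear_fn_def by blast
  define a where "a = map (\<lambda>i. i \<in> S) [0..<d]"
  have "a \<in> cube d" and "{i. i < d \<and> a ! i} = S"
    using S by (auto simp: a_def cube_def)
  with f show "\<exists>a\<in>cube d. \<forall>x\<in>cube d. f x = dot_mod2 a x"
    by (metis dot_mod2_eq_odd_sum_support odd_iff_mod_2_eq_one zero_neq_one)
next
  assume "\<exists>a\<in>cube d. \<forall>x\<in>cube d. f x = dot_mod2 a x"
  then obtain a where "a \<in> cube d" "\<forall>x\<in>cube d. f x = dot_mod2 a x"
    by blast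
  then show "linear_fn d f"
    unfolding linear_fn_def
    by (intro exI[of _ "{i. i < d \<and> a ! i}"]) (auto simp: dot_mod2_eq_odd_sum_support mod2_eq_if)
qed

lemma linear_fn_masked_sum:
  assumes "linear_fn d f" "set xs \<subseteq> cube d" "length M = length xs"
  shows "f (masked_sum d M xs) = dot_mod2 M (map f xs)"
proof -
  obtain a where "\<forall>x\<in>cube d. f x = dot_mod2 a x"
    using assms(1) linear_fn_iff_dot_mod2 by blast
  then have "map f xs = map (dot_mod2 a) xs" and "f (masked_sum d M xs) = dot_mod2 a (masked_sum d M xs)"
    using assms(2) masked_sum_in_cube by auto
  then show ?thesis
    using dot_mod2_masked_sum[OF assms(2,3), of a] by (simp only:)
qed

lemma fourier_signed:
  assumes "a \<in> cube d"
  shows "fourier d (signed f) a = 1 - 2 * real (card {x\<in>cube d. f x \<noteq> dot_mod2 a x}) / 2 ^ d"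
proof -
  have "(\<Sum>x\<in>cube d. signed f x * character a x) = (\<Sum>x\<in>cube d. 1 - 2 * of_bool (f x \<noteq> dot_mod2 a x))"
    by (rule sum.cong) (auto simp: signed_def character_def)
  also have "\<dots> = 2 ^ d - 2 * real (card {x\<in>cube d. f x \<noteq> dot_mod2 a x})"
    by (simp only: sum_subtractf sum_distrib_left[symmetric] sum_of_bool_card finite_cube)
       (simp add: card_cube)
  finally show ?thesis
    unfolding fourier_def by (simp add: diff_divide_distrib)
qed

lemma fourier_signed_le_if_far:
  assumes "eps_far_linear d e f" "a \<in> cube d"
  shows "fourier d (signed f) a \<le> 1 - 2 * e"
proof -
  have "linear_fn d (dot_mod2 a)"
    using assms(2) linear_fn_iff_dot_mod2 by blast
  then have "e * 2 ^ d \<le> real (card {x\<in>cube d. f x \<noteq> dot_mod2 a x})"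
    using assms(1) unfolding eps_far_linear_def by blast
  moreover have "fourier d (signed f) a * 2 ^ d = 2 ^ d - 2 * real (card {x\<in>cube d. f x \<noteq> dot_mod2 a x})"
    using fourier_signed[OF assms(2), of f] by (simp add: field_simps)
  ultimately have "fourier d (signed f) a * 2 ^ d \<le> (1 - 2 * e) * 2 ^ d"
    by (simp add: algebra_simps)
  then show ?thesis
    by simp
qed

lemma weight_Nil [simp]: "weight [] = 0"
  by (simp add: weight_def)

lemma weight_Cons [simp]: "weight (b # S) = weight S + of_bool b"
  by (simp add: weight_def)

lemma card_check_passes:
  "real (card {xs\<in>tuples (cube d) (length M). f (masked_sum d M xs) = dot_mod2 M (map f xs)})
     = (2 ^ (d * length M) + correlation d (signed f) M f) / 2"
proof -
  let ?L = "tuples (cube d) (length M)"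
  have "real (card {xs\<in>?L. f (masked_sum d M xs) = dot_mod2 M (map f xs)})
      = (\<Sum>xs\<in>?L. of_bool (f (masked_sum d M xs) = dot_mod2 M (map f xs)))"
    by (rule sum_of_bool_card[symmetric]) simp
  also have "\<dots> = (\<Sum>xs\<in>?L. (1 + signed f (masked_sum d M xs) * character M (map f xs)) / 2)"
    by (rule sum.cong) (auto simp: signed_def character_def)
  finally show ?thesis
    by (simp add: correlation_def sum_divide_distrib[symmetric] sum.distrib card_tuples card_cube
        power_mult)
qed

lemma sum_fourier_signed_power_le:
  assumes far: "eps_far_linear d e f" and e: "0 \<le> e" "e < 1" and w: "even w" "2 \<le> w"
  shows "(\<Sum>a\<in>cube d. fourier d (signed f) a * fourier d (signed f) a ^ w) \<le> 1 - e"
proof -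
  define c where "c = max (1 - 2 * e) 0"
  let ?h = "fourier d (signed f)"
  have "?h a * ?h a ^ w \<le> c * ?h a ^ 2" if a: "a \<in> cube d" for a
  proof -
    have "?h a ^ w = \<bar>?h a\<bar> ^ w"
      using w(1) by (simp add: power_even_abs)
    also have "\<dots> \<le> \<bar>?h a\<bar> ^ 2"
      using w(2) abs_fourier_signed_le_1[OF a] by (intro power_decreasing) auto
    finally have "?h a ^ w \<le> ?h a ^ 2"
      by simp
    moreover have "?h a \<le> c"
      using fourier_signed_le_if_far[OF far a] by (simp add: c_def)
    ultimately show ?thesis
      using w(1) by (intro mult_mono) (auto simp: c_def zero_le_even_power)
  qed
  then have "(\<Sum>a\<in>cube d. ?h a * ?h a ^ w) \<le> (\<Sum>a\<in>cube d. c * ?h a ^ 2)"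
    by (intro sum_mono)
  also have "\<dots> = c"
    by (simp add: sum_distrib_left[symmetric] parseval)
  also have "c \<le> 1 - e"
    using e by (simp add: c_def)
  finally show ?thesis .
qed

lemma card_check_passes_le_if_far:
  assumes far: "eps_far_linear d e f" and e: "0 \<le> e" "e < 1" and M: "even (weight M)" "2 \<le> weight M"
  shows "real (card {xs\<in>tuples (cube d) (length M). f (masked_sum d M xs) = dot_mod2 M (map f xs)})
           \<le> (1 - e / 2) * 2 ^ (d * length M)"
proof -
  have "correlation d (signed f) M f \<le> 2 ^ (d * length M) * (1 - e)"
    unfolding correlation_fourier by (rule mult_left_mono[OF sum_fourier_signed_power_le[OF far e M]]) simp
  then show ?thesis
    by (simp add: card_check_passes field_simps)
qed

definition even_mask :: "bool list \<Rightarrow> bool list" where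
  "even_mask S = odd (weight S) # S"

lemma length_even_mask [simp]: "length (even_mask S) = Suc (length S)"
  by (simp add: even_mask_def)

lemma even_weight_even_mask: "even (weight (even_mask S))"
  by (simp add: even_mask_def)

lemma weight_even_mask_ge_2: "True \<in> set S \<Longrightarrow> 2 \<le> weight (even_mask S)"
proof -
  assume "True \<in> set S"
  then have "1 \<le> weight S"
    by (auto simp: weight_def Suc_le_eq filter_empty_conv)
  then show ?thesis
    using even_weight_even_mask[of S] by (simp add: even_mask_def) presburger
qed

lemma even_mask_xor_vec:
  "length S = length S' \<Longrightarrow> even_mask (xor_vec S S') = xor_vec (even_mask S) (even_mask S')"
  unfolding even_mask_def by (induction S S' rule: xor_vec.induct) auto

lemma even_mask_zero_vec: "even_mask (zero_vec k) = replicate (Suc k) False"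
proof -
  have "weight (zero_vec k) = 0"
    by (simp add: weight_def zero_vec_def)
  then show ?thesis
    by (simp add: even_mask_def zero_vec_def)
qed

lemma True_in_set_if_nonzero: "S \<in> cube k \<Longrightarrow> S \<noteq> zero_vec k \<Longrightarrow> True \<in> set S"
  by (metis (full_types) cube_def mem_Collect_eq replicate_length_same zero_vec_def)

definition block_space :: "nat \<Rightarrow> nat \<Rightarrow> (bool list list \<times> bool list) set" where
  "block_space d k = tuples (cube d) (Suc k) \<times> cube k"

definition block_queries :: "nat \<Rightarrow> bool list list \<times> bool list \<Rightarrow> bool list list" where
  "block_queries d w = fst w @ [masked_sum d (even_mask (snd w)) (fst w)]"

definition block_passes :: "nat \<Rightarrow> (bool list \<Rightarrow> bool) \<Rightarrow> bool list list \<times> bool list \<Rightarrow> bool" where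
  "block_passes d f w \<longleftrightarrow>
     f (masked_sum d (even_mask (snd w)) (fst w)) = dot_mod2 (even_mask (snd w)) (map f (fst w))"

lemma finite_block_space [simp]: "finite (block_space d k)"
  by (simp add: block_space_def)

lemma card_block_space: "card (block_space d k) = 2 ^ (d * Suc k) * 2 ^ k"
  by (simp add: block_space_def card_cartesian_product card_tuples card_cube power_mult power_add)

lemma block_space_nonempty: "block_space d k \<noteq> {}"
  using card_block_space[of d k] by auto

lemma sum_block_space:
  "(\<Sum>w\<in>block_space d k. g w) = (\<Sum>xs\<in>tuples (cube d) (Suc k). \<Sum>S\<in>cube k. g (xs, S))"
  unfolding block_space_def sum.cartesian_product by (simp only: split_def prod.collapse)

lemma length_block_queries: "w \<in> block_space d k \<Longrightarrow> length (block_queries d w) = k + 2"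
  by (auto simp: block_space_def block_queries_def tuples_def)

lemma block_queries_in_cube: "w \<in> block_space d k \<Longrightarrow> set (block_queries d w) \<subseteq> cube d"
  by (auto simp: block_space_def block_queries_def tuples_def intro!: masked_sum_in_cube)

lemma block_passes_if_linear:
  assumes "linear_fn d f" "w \<in> block_space d k"
  shows "block_passes d f w"
proof -
  obtain xs S where "w = (xs, S)" "set xs \<subseteq> cube d" "length xs = Suc k" "length S = k"
    using assms(2) by (auto simp: block_space_def tuples_def cube_def)
  then show ?thesis
    using linear_fn_masked_sum[OF assms(1), of xs "even_mask S"] by (simp add: block_passes_def)
qed

lemma card_block_passes_le_if_far:
  assumes far: "eps_far_linear d e f" and e: "0 \<le> e" "e < 1" and k: "1 \<le> k"
  shows "real (card {w\<in>block_space d k. block_passes d f w}) \<le> (1 - e / 4) * real (card (block_space d k))"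
proof -
  define P :: real where "P = 2 ^ (d * Suc k)"
  define K :: real where "K = 2 ^ k"
  let ?passes = "\<lambda>S. real (card {xs\<in>tuples (cube d) (Suc k). block_passes d f (xs, S)})"
  have passes_le: "?passes S \<le> P" for S
  proof -
    have "?passes S \<le> real (card (tuples (cube d) (Suc k)))"
      by (intro of_nat_mono card_mono) auto
    then show ?thesis
      by (simp add: P_def card_tuples card_cube power_mult power_add)
  qed
  have passes_nonzero_le: "?passes S \<le> (1 - e / 2) * P" if S: "S \<in> cube k - {zero_vec k}" for S
    using card_check_passes_le_if_far[OF far e even_weight_even_mask weight_even_mask_ge_2]
      True_in_set_if_nonzero S
    by (auto simp: block_passes_def P_def cube_def)
  have "real (card {w\<in>block_space d k. block_passes d f w})
      = (\<Sum>w\<in>block_space d k. of_bool (block_passes d f w))"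
    by (rule sum_of_bool_card[symmetric]) simp
  also have "\<dots> = (\<Sum>S\<in>cube k. ?passes S)"
    unfolding sum_block_space by (subst sum.swap) (simp add: sum_of_bool_card del: sum_of_bool_eq)
  also have "\<dots> = ?passes (zero_vec k) + (\<Sum>S\<in>cube k - {zero_vec k}. ?passes S)"
    by (rule sum.remove) auto
  also have "\<dots> \<le> P + (\<Sum>S\<in>cube k - {zero_vec k}. (1 - e / 2) * P)"
    by (intro add_mono passes_le sum_mono passes_nonzero_le)
  also have "\<dots> = P + (K - 1) * ((1 - e / 2) * P)"
    by (simp add: card_cube K_def of_nat_diff)
  also have "\<dots> \<le> (1 - e / 4) * (P * K)"
  proof -
    have "(2::real) ^ 1 \<le> K"
      unfolding K_def using k by (intro power_increasing) auto
    then have "0 \<le> P * e * (K - 2)"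
      using e by (simp add: P_def)
    then show ?thesis
      by (simp add: algebra_simps)
  qed
  also have "\<dots> = (1 - e / 4) * real (card (block_space d k))"
    by (simp add: card_block_space P_def K_def)
  finally show ?thesis .
qed

fun hits_corruption :: "adversary \<Rightarrow> (bool list \<Rightarrow> bool) \<Rightarrow> (bool list \<Rightarrow> bool) \<Rightarrow>
    (bool list \<times> bool) list \<Rightarrow> bool list list \<Rightarrow> bool" where
  "hits_corruption adv f Or h [] = False"
| "hits_corruption adv f Or h (q # qs) =
     (Or q \<noteq> f q \<or> hits_corruption adv f (adv (h @ [(q, Or q)]) Or) (h @ [(q, Or q)]) qs)"

fun oracle_after :: "adversary \<Rightarrow> (bool list \<Rightarrow> bool) \<Rightarrow> (bool list \<times> bool) list \<Rightarrow>
    bool list list \<Rightarrow> (bool list \<Rightarrow> bool) \<times> (bool list \<times> bool) list" where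
  "oracle_after adv Or h [] = (Or, h)"
| "oracle_after adv Or h (q # qs) = oracle_after adv (adv (h @ [(q, Or q)]) Or) (h @ [(q, Or q)]) qs"

definition corruptions :: "nat \<Rightarrow> (bool list \<Rightarrow> bool) \<Rightarrow> (bool list \<Rightarrow> bool) \<Rightarrow> nat" where
  "corruptions d f Or = card {x\<in>cube d. Or x \<noteq> f x}"

lemma run_oracle_if_no_hit:
  "\<not> hits_corruption adv f Or h qs \<Longrightarrow> run_oracle adv Or h qs = map f qs"
  by (induction qs arbitrary: Or h) (auto simp: Let_def)

lemma hits_corruption_append:
  "hits_corruption adv f Or h (qs @ qs') \<longleftrightarrow>
     hits_corruption adv f Or h qs \<or>
     hits_corruption adv f (fst (oracle_after adv Or h qs)) (snd (oracle_after adv Or h qs)) qs'"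
  by (induction qs arbitrary: Or h) auto

lemma length_history_after: "length (snd (oracle_after adv Or h qs)) = length h + length qs"
  by (induction qs arbitrary: Or h) auto

lemma corruptions_step:
  assumes "valid_adversary d t adv"
  shows "corruptions d f (adv h Or) \<le> corruptions d f Or + t"
proof -
  have "{x\<in>cube d. adv h Or x \<noteq> f x} \<subseteq> {x\<in>cube d. Or x \<noteq> f x} \<union> {x\<in>cube d. adv h Or x \<noteq> Or x}"
    by auto
  then have "corruptions d f (adv h Or) \<le> card ({x\<in>cube d. Or x \<noteq> f x} \<union> {x\<in>cube d. adv h Or x \<noteq> Or x})"
    unfolding corruptions_def by (intro card_mono) auto
  also have "\<dots> \<le> corruptions d f Or + card {x\<in>cube d. adv h Or x \<noteq> Or x}"
    unfolding corruptions_def by (rule card_Un_le)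
  also have "card {x\<in>cube d. adv h Or x \<noteq> Or x} \<le> t"
    using assms unfolding valid_adversary_def by blast
  finally show ?thesis
    by simp
qed

lemma corruptions_after:
  assumes "valid_adversary d t adv"
  shows "corruptions d f (fst (oracle_after adv Or h qs)) \<le> corruptions d f Or + t * length qs"
proof (induction qs arbitrary: Or h)
  case (Cons q qs)
  have "corruptions d f (fst (oracle_after adv Or h (q # qs)))
      \<le> corruptions d f (adv (h @ [(q, Or q)]) Or) + t * length qs"
    using Cons.IH by simp
  also have "\<dots> \<le> corruptions d f Or + t + t * length qs"
    using corruptions_step[OF assms] by simp
  finally show ?case
    by simp
qed simp

lemma corruptions_after_le_history:
  assumes "valid_adversary d t adv" "corruptions d f Or \<le> t * length h"
  shows "corruptions d f (fst (oracle_after adv Or h qs)) \<le> t * length (snd (oracle_after adv Or h qs))"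
  using corruptions_after[OF assms(1), of f Or h qs] assms(2)
  by (simp add: length_history_after algebra_simps)

lemma sum_hits_corruption_concat:
  assumes U: "finite U" and adv: "valid_adversary d t adv"
    and len: "\<And>u. u \<in> U \<Longrightarrow> length (\<phi> u) = l"
    and one_block: "\<And>Or h. corruptions d f Or \<le> t * length h \<Longrightarrow> length h + l \<le> Q \<Longrightarrow>
       (\<Sum>u\<in>U. of_bool (hits_corruption adv f Or h (\<phi> u))) \<le> \<delta> * real (card U)"
    and "corruptions d f Or \<le> t * length h" "length h + n * l \<le> Q"
  shows "(\<Sum>us\<in>tuples U n. of_bool (hits_corruption adv f Or h (concat (map \<phi> us))))
           \<le> n * \<delta> * real (card U) ^ n"
  using assms(5,6)
proof (induction n arbitrary: Or h)
  case (Suc n)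
  define Or' where "Or' u = fst (oracle_after adv Or h (\<phi> u))" for u
  define h' where "h' u = snd (oracle_after adv Or h (\<phi> u))" for u
  have later_blocks: "(\<Sum>us\<in>tuples U n. of_bool (hits_corruption adv f (Or' u) (h' u) (concat (map \<phi> us))))
      \<le> n * \<delta> * real (card U) ^ n" if u: "u \<in> U" for u
  proof (rule Suc.IH)
    show "corruptions d f (Or' u) \<le> t * length (h' u)"
      unfolding Or'_def h'_def by (rule corruptions_after_le_history[OF adv Suc.prems(1)])
    show "length (h' u) + n * l \<le> Q"
      using Suc.prems(2) len[OF u] by (simp add: h'_def length_history_after)
  qed
  have "(\<Sum>us\<in>tuples U (Suc n). of_bool (hits_corruption adv f Or h (concat (map \<phi> us))) :: real)
      \<le> (\<Sum>u\<in>U. \<Sum>us\<in>tuples U n. of_bool (hits_corruption adv f Or h (\<phi> u)) +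
           of_bool (hits_corruption adv f (Or' u) (h' u) (concat (map \<phi> us))))"
    unfolding sum_tuples_Suc[OF U] by (auto intro!: sum_mono simp: Or'_def h'_def hits_corruption_append)
  also have "\<dots> = real (card U) ^ n * (\<Sum>u\<in>U. of_bool (hits_corruption adv f Or h (\<phi> u))) +
      (\<Sum>u\<in>U. \<Sum>us\<in>tuples U n. of_bool (hits_corruption adv f (Or' u) (h' u) (concat (map \<phi> us))))"
    by (simp add: sum.distrib sum_distrib_left card_tuples[OF U])
  also have "\<dots> \<le> real (card U) ^ n * (\<delta> * real (card U)) + (\<Sum>u\<in>U. n * \<delta> * real (card U) ^ n)"
    using Suc.prems by (intro add_mono mult_left_mono one_block sum_mono later_blocks) auto
  also have "\<dots> = Suc n * \<delta> * real (card U) ^ Suc n"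
    by (simp add: algebra_simps)
  finally show ?case .
qed simp

lemma sum_hits_corruption_uniform:
  assumes adv: "valid_adversary d t adv"
    and "corruptions d f Or \<le> t * length h" "length h + k \<le> Q"
  shows "(\<Sum>xs\<in>tuples (cube d) k. of_bool (hits_corruption adv f Or h xs))
           \<le> k * (real t * real Q / 2 ^ d) * 2 ^ (d * k)"
proof -
  have "(\<Sum>us\<in>tuples (cube d) k. of_bool (hits_corruption adv f Or h (concat (map (\<lambda>x. [x]) us))))
      \<le> k * (real t * real Q / 2 ^ d) * real (card (cube d)) ^ k"
  proof (rule sum_hits_corruption_concat[OF finite_cube adv, where l=1 and Q=Q])
    fix Or :: "bool list \<Rightarrow> bool" and h :: "(bool list \<times> bool) list"
    assume "corruptions d f Or \<le> t * length h" "length h + 1 \<le> Q"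
    then have "corruptions d f Or \<le> t * Q"
      by (meson add_leD1 le_trans mult_le_mono2)
    then have "real (corruptions d f Or) \<le> real t * real Q"
      by (metis of_nat_le_iff of_nat_mult)
    then show "(\<Sum>u\<in>cube d. of_bool (hits_corruption adv f Or h [u])) \<le> real t * real Q / 2 ^ d * real (card (cube d))"
      by (simp add: corruptions_def sum_of_bool_card card_cube del: sum_of_bool_eq)
  qed (use assms in auto)
  moreover have "concat (map (\<lambda>x. [x]) xs) = xs" for xs :: "bool list list"
    by (induction xs) auto
  ultimately show ?thesis
    by (simp add: card_cube power_mult)
qed

definition kernel_size :: "nat \<Rightarrow> nat \<Rightarrow> bool list list \<Rightarrow> nat" where
  "kernel_size d k xs = card {S\<in>cube k. masked_sum d (even_mask S) xs = zero_vec d}"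

lemma card_fiber_le_kernel_size:
  assumes xs: "xs \<in> tuples (cube d) (Suc k)"
  shows "card {S\<in>cube k. masked_sum d (even_mask S) xs = a} \<le> kernel_size d k xs"
proof (cases "{S\<in>cube k. masked_sum d (even_mask S) xs = a} = {}")
  case True
  then show ?thesis
    by (metis card.empty zero_le)
next
  case False
  then obtain S0 where S0: "S0 \<in> cube k" "masked_sum d (even_mask S0) xs = a"
    by blast
  have xs': "set xs \<subseteq> cube d" "length xs = Suc k"
    using xs by (auto simp: tuples_def)
  show ?thesis
    unfolding kernel_size_def
  proof (rule card_inj_on_le[where f="\<lambda>S. xor_vec S S0"])
    show "inj_on (\<lambda>S. xor_vec S S0) {S\<in>cube k. masked_sum d (even_mask S) xs = a}"
      using S0(1) by (intro inj_onI) (metis (mono_tags) cube_def mem_Collect_eq xor_vec_xor_vec_cancel)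
    have "length a = d"
      using S0(2) length_masked_sum[OF xs'(1)] by auto
    then have "masked_sum d (even_mask (xor_vec S S0)) xs = zero_vec d"
      if "S \<in> cube k" "masked_sum d (even_mask S) xs = a" for S
      using that S0 xs' xor_vec_self[of a]
      by (simp add: even_mask_xor_vec masked_sum_xor_vec cube_def)
    then show "(\<lambda>S. xor_vec S S0) ` {S\<in>cube k. masked_sum d (even_mask S) xs = a}
        \<subseteq> {S\<in>cube k. masked_sum d (even_mask S) xs = zero_vec d}"
      using S0(1) by (auto intro: xor_vec_in_cube)
  qed simp
qed

lemma card_preimage_le_kernel_size:
  assumes "xs \<in> tuples (cube d) (Suc k)" "finite D"
  shows "card {S\<in>cube k. masked_sum d (even_mask S) xs \<in> D} \<le> card D * kernel_size d k xs"
proof -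
  have "{S\<in>cube k. masked_sum d (even_mask S) xs \<in> D} = (\<Union>a\<in>D. {S\<in>cube k. masked_sum d (even_mask S) xs = a})"
    by auto
  then have "card {S\<in>cube k. masked_sum d (even_mask S) xs \<in> D}
      \<le> (\<Sum>a\<in>D. card {S\<in>cube k. masked_sum d (even_mask S) xs = a})"
    using card_UN_le[OF assms(2)] by simp
  also have "\<dots> \<le> (\<Sum>a\<in>D. kernel_size d k xs)"
    by (intro sum_mono card_fiber_le_kernel_size[OF assms(1)])
  finally show ?thesis
    by simp
qed

lemma sum_cube_xor_vec_eq:
  assumes "m \<in> cube d" "a \<in> cube d"
  shows "(\<Sum>x\<in>cube d. of_bool (xor_vec x m = a) :: real) = 1"
  using sum_cube_translate[OF assms(1), of "\<lambda>z. of_bool (z = a) :: real"] assms(2)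
  by simp

lemma sum_masked_sum_eq:
  assumes "True \<in> set M" "a \<in> cube d"
  shows "(\<Sum>xs\<in>tuples (cube d) (length M). of_bool (masked_sum d M xs = a) :: real) = 2 ^ (d * (length M - 1))"
  using assms(1)
proof (induction M)
  case (Cons b M)
  show ?case
  proof (cases b)
    case True
    have "(\<Sum>xs\<in>tuples (cube d) (length (b # M)). of_bool (masked_sum d (b # M) xs = a) :: real)
        = (\<Sum>xs\<in>tuples (cube d) (length M). \<Sum>x\<in>cube d. of_bool (xor_vec x (masked_sum d M xs) = a))"
      using True by (subst sum.swap) (simp add: sum_tuples_Suc del: sum_of_bool_eq)
    also have "\<dots> = (\<Sum>xs\<in>tuples (cube d) (length M). 1)"
      using assms(2) by (intro sum.cong refl sum_cube_xor_vec_eq) (auto simp: tuples_def masked_sum_in_cube)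
    finally show ?thesis
      by (simp add: card_tuples card_cube power_mult)
  next
    case False
    then have "True \<in> set M"
      using Cons.prems by auto
    moreover from this have "d * length M = d + d * (length M - 1)"
      by (cases M) auto
    ultimately show ?thesis
      using False Cons.IH by (simp add: sum_tuples_Suc card_cube power_add del: sum_of_bool_eq)
  qed
qed simp

lemma sum_kernel_size_le:
  "(\<Sum>xs\<in>tuples (cube d) (Suc k). real (kernel_size d k xs)) \<le> 2 ^ (d * Suc k) + 2 ^ k * 2 ^ (d * k)"
proof -
  let ?L = "tuples (cube d) (Suc k)"
  let ?in_kernel = "\<lambda>S xs. of_bool (masked_sum d (even_mask S) xs = zero_vec d) :: real"
  have zero: "(\<Sum>xs\<in>?L. ?in_kernel (zero_vec k) xs) = 2 ^ (d * Suc k)"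
    by (simp only: even_mask_zero_vec masked_sum_replicate_False)
       (simp add: card_tuples card_cube power_mult power_add)
  have nonzero: "(\<Sum>xs\<in>?L. ?in_kernel S xs) = 2 ^ (d * k)" if "S \<in> cube k - {zero_vec k}" for S
    using sum_masked_sum_eq[of "even_mask S" "zero_vec d" d] True_in_set_if_nonzero[of S k] that
    by (simp add: even_mask_def cube_def)
  have "(\<Sum>xs\<in>?L. real (kernel_size d k xs)) = (\<Sum>S\<in>cube k. \<Sum>xs\<in>?L. ?in_kernel S xs)"
    unfolding kernel_size_def by (subst sum.swap) (simp add: sum_of_bool_card del: sum_of_bool_eq)
  also have "\<dots> = (\<Sum>xs\<in>?L. ?in_kernel (zero_vec k) xs) + (\<Sum>S\<in>cube k - {zero_vec k}. \<Sum>xs\<in>?L. ?in_kernel S xs)"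
    by (rule sum.remove) auto
  also have "\<dots> = 2 ^ (d * Suc k) + real (card (cube k - {zero_vec k})) * 2 ^ (d * k)"
    by (simp add: zero nonzero del: sum_of_bool_eq)
  also have "\<dots> \<le> 2 ^ (d * Suc k) + 2 ^ k * 2 ^ (d * k)"
    by (simp add: card_cube)
  finally show ?thesis .
qed

lemma sum_block_hits_le_kernel:
  assumes adv: "valid_adversary d t adv"
    and inv: "corruptions d f Or \<le> t * length h" and Q: "length h + (k + 2) \<le> Q"
  shows "(\<Sum>w\<in>block_space d k. of_bool (hits_corruption adv f Or h (block_queries d w)))
    \<le> (\<Sum>xs\<in>tuples (cube d) (Suc k). 2 ^ k * of_bool (hits_corruption adv f Or h xs)
          + real t * real Q * real (kernel_size d k xs))"
proof -
  let ?L = "tuples (cube d) (Suc k)"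
  define D where "D xs = {x\<in>cube d. fst (oracle_after adv Or h xs) x \<noteq> f x}" for xs
  have card_D: "real (card (D xs)) \<le> real t * real Q" if xs: "xs \<in> ?L" for xs
  proof -
    have "card (D xs) \<le> t * length (snd (oracle_after adv Or h xs))"
      unfolding D_def corruptions_def[symmetric] by (rule corruptions_after_le_history[OF adv inv])
    also have "\<dots> \<le> t * Q"
      using Q xs by (intro mult_le_mono2) (simp add: length_history_after tuples_def)
    finally show ?thesis
      by (metis of_nat_le_iff of_nat_mult)
  qed
  have "(\<Sum>w\<in>block_space d k. of_bool (hits_corruption adv f Or h (block_queries d w)) :: real)
      = (\<Sum>xs\<in>?L. \<Sum>S\<in>cube k. of_bool (hits_corruption adv f Or h (block_queries d (xs, S))))"
    by (rule sum_block_space)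
  also have "\<dots> \<le> (\<Sum>xs\<in>?L. \<Sum>S\<in>cube k. of_bool (hits_corruption adv f Or h xs)
      + of_bool (masked_sum d (even_mask S) xs \<in> D xs))"
    by (intro sum_mono) (auto simp: block_queries_def hits_corruption_append D_def tuples_def
        masked_sum_in_cube)
  also have "\<dots> = (\<Sum>xs\<in>?L. 2 ^ k * of_bool (hits_corruption adv f Or h xs)
      + real (card {S\<in>cube k. masked_sum d (even_mask S) xs \<in> D xs}))"
    by (simp add: sum.distrib sum_of_bool_card card_cube del: sum_of_bool_eq)
  also have "\<dots> \<le> (\<Sum>xs\<in>?L. 2 ^ k * of_bool (hits_corruption adv f Or h xs)
      + real t * real Q * real (kernel_size d k xs))"
  proof (intro sum_mono add_left_mono)
    fix xs assume xs: "xs \<in> ?L"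
    have "real (card {S\<in>cube k. masked_sum d (even_mask S) xs \<in> D xs}) \<le> real (card (D xs)) * real (kernel_size d k xs)"
      using card_preimage_le_kernel_size[OF xs, of "D xs"] by (simp add: D_def flip: of_nat_mult)
    also have "\<dots> \<le> real t * real Q * real (kernel_size d k xs)"
      by (intro mult_right_mono card_D xs) simp
    finally show "real (card {S\<in>cube k. masked_sum d (even_mask S) xs \<in> D xs}) \<le> real t * real Q * real (kernel_size d k xs)" .
  qed
  finally show ?thesis .
qed

lemma sum_block_hits_le:
  assumes adv: "valid_adversary d t adv"
    and inv: "corruptions d f Or \<le> t * length h" and Q: "length h + (k + 2) \<le> Q"
  shows "(\<Sum>w\<in>block_space d k. of_bool (hits_corruption adv f Or h (block_queries d w)))
    \<le> ((k + 2) * (real t * real Q) / 2 ^ d + real t * real Q / 2 ^ k) * real (card (block_space d k))"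
proof -
  let ?L = "tuples (cube d) (Suc k)"
  define N where "N = real t * real Q"
  have "(\<Sum>w\<in>block_space d k. of_bool (hits_corruption adv f Or h (block_queries d w)))
      \<le> 2 ^ k * (\<Sum>xs\<in>?L. of_bool (hits_corruption adv f Or h xs)) + N * (\<Sum>xs\<in>?L. real (kernel_size d k xs))"
    using sum_block_hits_le_kernel[OF assms] by (simp add: N_def sum.distrib sum_distrib_left mult_ac del: sum_of_bool_eq)
  also have "\<dots> \<le> 2 ^ k * (Suc k * (N / 2 ^ d) * 2 ^ (d * Suc k)) + N * (2 ^ (d * Suc k) + 2 ^ k * 2 ^ (d * k))"
    using Q sum_hits_corruption_uniform[OF adv inv, of "Suc k" Q] sum_kernel_size_le[of d k]
    by (intro add_mono mult_left_mono) (auto simp: N_def)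
  also have "\<dots> = ((k + 2) * N / 2 ^ d + N / 2 ^ k) * real (card (block_space d k))"
    by (simp add: card_block_space power_add field_simps)
  finally show ?thesis
    by (simp add: N_def add.commute)
qed

definition tester_queries :: "nat \<Rightarrow> (bool list list \<times> bool list) list \<Rightarrow> bool list list" where
  "tester_queries d ws = concat (map (block_queries d) ws)"

fun tester_accepts :: "(bool list list \<times> bool list) list \<Rightarrow> bool list \<Rightarrow> bool" where
  "tester_accepts [] ans = True"
| "tester_accepts (w # ws) ans \<longleftrightarrow>
     ans ! length (fst w) = dot_mod2 (even_mask (snd w)) (take (length (fst w)) ans) \<and>
     tester_accepts ws (drop (Suc (length (fst w))) ans)"

definition tester :: "nat \<Rightarrow> nat \<Rightarrow> nat \<Rightarrow> (bool list list \<times> (bool list \<Rightarrow> bool)) pmf" where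
  "tester d m k = map_pmf (\<lambda>ws. (tester_queries d ws, tester_accepts ws)) (pmf_of_set (tuples (block_space d k) m))"

definition hit_prob_bound :: "nat \<Rightarrow> nat \<Rightarrow> nat \<Rightarrow> nat \<Rightarrow> real" where
  "hit_prob_bound d t m k = m * ((real k + 2) * (real t * real (m * (k + 2))) / 2 ^ d + real t * real (m * (k + 2)) / 2 ^ k)"

lemma accept_prob_tester:
  "accept_prob (tester d m k) adv f =
     real (card {ws\<in>tuples (block_space d k) m. tester_accepts ws (run_oracle adv f [] (tester_queries d ws))})
       / real (card (tuples (block_space d k) m))"
proof -
  have "accept_prob (tester d m k) adv f
      = measure (pmf_of_set (tuples (block_space d k) m)) {ws. tester_accepts ws (run_oracle adv f [] (tester_queries d ws))}"
    unfolding accept_prob_def tester_def by (simp add: vimage_def)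
  also have "\<dots> = real (card (tuples (block_space d k) m \<inter> {ws. tester_accepts ws (run_oracle adv f [] (tester_queries d ws))}))
      / real (card (tuples (block_space d k) m))"
    by (rule measure_pmf_of_set) (simp_all add: tuples_nonempty block_space_nonempty)
  finally show ?thesis
    by (simp add: Int_def conj_commute)
qed

lemma tester_queries_in_support:
  assumes "(qs, dec) \<in> set_pmf (tester d m k)"
  shows "set qs \<subseteq> cube d" "length qs = m * (k + 2)"
proof -
  obtain ws where "ws \<in> tuples (block_space d k) m" "qs = tester_queries d ws"
    using assms by (auto simp: tester_def tuples_nonempty block_space_nonempty)
  then have ws: "set ws \<subseteq> block_space d k" "length ws = m" "qs = tester_queries d ws"
    by (auto simp: tuples_def)
  then show "set qs \<subseteq> cube d"
    by (auto simp: tester_queries_def dest!: block_queries_in_cube)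
  have "length qs = (\<Sum>w\<leftarrow>ws. length (block_queries d w))"
    using ws by (simp add: tester_queries_def length_concat comp_def)
  also have "\<dots> = (\<Sum>w\<leftarrow>ws. k + 2)"
    using ws(1) by (intro arg_cong[where f=sum_list] map_cong) (auto simp: length_block_queries)
  finally show "length qs = m * (k + 2)"
    using ws by (simp add: sum_list_triv)
qed

lemma tester_accepts_map:
  "set ws \<subseteq> block_space d k \<Longrightarrow> tester_accepts ws (map f (tester_queries d ws)) \<longleftrightarrow> (\<forall>w\<in>set ws. block_passes d f w)"
proof (induction ws)
  case (Cons w ws)
  then show ?case
    by (cases w) (simp add: tester_queries_def block_queries_def block_passes_def nth_append)
qed (simp add: tester_queries_def)

lemma card_tester_hits_le:
  assumes adv: "valid_adversary d t adv"
  shows "real (card {ws\<in>tuples (block_space d k) m. hits_corruption adv f f [] (tester_queries d ws)})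
           \<le> hit_prob_bound d t m k * real (card (tuples (block_space d k) m))"
proof -
  have "(\<Sum>ws\<in>tuples (block_space d k) m. of_bool (hits_corruption adv f f [] (concat (map (block_queries d) ws))))
      \<le> m * ((real k + 2) * (real t * real (m * (k + 2))) / 2 ^ d + real t * real (m * (k + 2)) / 2 ^ k)
          * real (card (block_space d k)) ^ m"
    by (rule sum_hits_corruption_concat[OF finite_block_space adv length_block_queries sum_block_hits_le[OF adv]])
       (auto simp: corruptions_def)
  then show ?thesis
    by (simp add: hit_prob_bound_def tester_queries_def card_tuples sum_of_bool_card del: sum_of_bool_eq)
qed

lemma accept_prob_tester_ge_if_linear:
  assumes lin: "linear_fn d f" and adv: "valid_adversary d t adv"
  shows "1 - hit_prob_bound d t m k \<le> accept_prob (tester d m k) adv f"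
proof -
  let ?\<Omega> = "tuples (block_space d k) m"
  let ?hit = "\<lambda>ws. hits_corruption adv f f [] (tester_queries d ws)"
  have "tester_accepts ws (run_oracle adv f [] (tester_queries d ws))" if "ws \<in> ?\<Omega>" "\<not> ?hit ws" for ws
  proof -
    have "set ws \<subseteq> block_space d k"
      using that(1) by (simp add: tuples_def)
    with block_passes_if_linear[OF lin] show ?thesis
      using that(2) by (auto simp: run_oracle_if_no_hit tester_accepts_map)
  qed
  then have "?\<Omega> \<subseteq> {ws\<in>?\<Omega>. ?hit ws} \<union> {ws\<in>?\<Omega>. tester_accepts ws (run_oracle adv f [] (tester_queries d ws))}"
    by auto
  then have "card ?\<Omega> \<le> card ({ws\<in>?\<Omega>. ?hit ws}
      \<union> {ws\<in>?\<Omega>. tester_accepts ws (run_oracle adv f [] (tester_queries d ws))})"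
    by (intro card_mono) auto
  also have "\<dots> \<le> card {ws\<in>?\<Omega>. ?hit ws}
      + card {ws\<in>?\<Omega>. tester_accepts ws (run_oracle adv f [] (tester_queries d ws))}"
    by (rule card_Un_le)
  finally have "real (card ?\<Omega>) - real (card {ws\<in>?\<Omega>. ?hit ws})
      \<le> real (card {ws\<in>?\<Omega>. tester_accepts ws (run_oracle adv f [] (tester_queries d ws))})"
    by (simp flip: of_nat_add)
  with card_tester_hits_le[OF adv, where f=f and k=k and m=m] have
    "(1 - hit_prob_bound d t m k) * real (card ?\<Omega>) \<le> real (card {ws\<in>?\<Omega>. tester_accepts ws (run_oracle adv f [] (tester_queries d ws))})"
    by (simp add: algebra_simps)
  moreover have "0 < real (card ?\<Omega>)"
    by (simp add: card_gt_0_iff tuples_nonempty block_space_nonempty)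
  ultimately show ?thesis
    unfolding accept_prob_tester by (simp add: pos_le_divide_eq)
qed

lemma accept_prob_tester_le_if_far:
  assumes far: "eps_far_linear d e f" and e: "0 \<le> e" "e < 1" and k: "1 \<le> k"
    and adv: "valid_adversary d t adv"
  shows "accept_prob (tester d m k) adv f \<le> hit_prob_bound d t m k + (1 - e / 4) ^ m"
proof -
  let ?\<Omega> = "tuples (block_space d k) m"
  let ?hit = "\<lambda>ws. hits_corruption adv f f [] (tester_queries d ws)"
  let ?passing = "tuples {w\<in>block_space d k. block_passes d f w} m"
  have "ws \<in> ?passing" if "ws \<in> ?\<Omega>" "tester_accepts ws (run_oracle adv f [] (tester_queries d ws))" "\<not> ?hit ws"
    for ws
  proof -
    have "set ws \<subseteq> block_space d k"
      using that(1) by (simp add: tuples_def)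
    then show ?thesis
      using that by (auto simp: run_oracle_if_no_hit tester_accepts_map tuples_def)
  qed
  then have "{ws\<in>?\<Omega>. tester_accepts ws (run_oracle adv f [] (tester_queries d ws))} \<subseteq> {ws\<in>?\<Omega>. ?hit ws} \<union> ?passing"
    by auto
  then have "card {ws\<in>?\<Omega>. tester_accepts ws (run_oracle adv f [] (tester_queries d ws))}
      \<le> card ({ws\<in>?\<Omega>. ?hit ws} \<union> ?passing)"
    by (intro card_mono) auto
  also have "\<dots> \<le> card {ws\<in>?\<Omega>. ?hit ws} + card ?passing"
    by (rule card_Un_le)
  finally have "real (card {ws\<in>?\<Omega>. tester_accepts ws (run_oracle adv f [] (tester_queries d ws))})
      \<le> real (card {ws\<in>?\<Omega>. ?hit ws}) + real (card ?passing)"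
    by (simp flip: of_nat_add)
  also have "\<dots> \<le> hit_prob_bound d t m k * real (card ?\<Omega>) + ((1 - e / 4) * real (card (block_space d k))) ^ m"
    using card_tester_hits_le[OF adv, where f=f and k=k and m=m]
      power_mono[OF card_block_passes_le_if_far[OF far e k], of m]
    by (simp add: card_tuples)
  also have "\<dots> = (hit_prob_bound d t m k + (1 - e / 4) ^ m) * real (card ?\<Omega>)"
    by (simp add: card_tuples power_mult_distrib distrib_right)
  finally show ?thesis
    unfolding accept_prob_tester
    by (simp add: field_simps card_gt_0_iff tuples_nonempty block_space_nonempty)
qed

definition num_blocks :: "real \<Rightarrow> nat" where
  "num_blocks e = nat \<lceil>12 / e\<rceil>"

text \<open>4056 = 24 * 13^2: with num_blocks e \<le> 13 / e this makes 2^(block_dim e t) exceed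
  24 (num_blocks e)^2 (t + 1) times the block length.\<close>
definition dim_threshold :: "real \<Rightarrow> nat \<Rightarrow> real" where
  "dim_threshold e t = 4056 * (real t + 1) / e ^ 2"

definition log_threshold :: "real \<Rightarrow> nat \<Rightarrow> nat" where
  "log_threshold e t = nat \<lceil>log 2 (dim_threshold e t)\<rceil>"

definition block_dim :: "real \<Rightarrow> nat \<Rightarrow> nat" where
  "block_dim e t = 2 * log_threshold e t + 5"

lemma num_blocks_bounds:
  assumes "0 < e" "e < 1"
  shows "12 / e \<le> real (num_blocks e)" "real (num_blocks e) \<le> 13 / e"
proof -
  show "12 / e \<le> real (num_blocks e)"
    unfolding num_blocks_def by (rule of_nat_ceiling)
  have "real (num_blocks e) = of_int \<lceil>12 / e\<rceil>"
    using assms unfolding num_blocks_def by (simp add: order.strict_implies_order)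
  also have "\<dots> \<le> 12 / e + 1"
    by (rule of_int_ceiling_le_add_one)
  also have "\<dots> \<le> 13 / e"
    using assms by (simp add: field_simps)
  finally show "real (num_blocks e) \<le> 13 / e" .
qed

lemma dim_threshold_ge_1:
  assumes "0 < e" "e < 1"
  shows "1 \<le> dim_threshold e t"
proof -
  have "e ^ 2 \<le> 1"
    using assms by (simp add: power_le_one)
  then show ?thesis
    using assms by (simp add: dim_threshold_def field_simps)
qed

lemma log_threshold_bounds:
  assumes "0 < e" "e < 1"
  shows "dim_threshold e t \<le> 2 ^ log_threshold e t" "real (log_threshold e t) \<le> log 2 (dim_threshold e t) + 1"
proof -
  have X: "1 \<le> dim_threshold e t"
    using dim_threshold_ge_1[OF assms] .
  have "log 2 (dim_threshold e t) \<le> real (log_threshold e t)"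
    unfolding log_threshold_def by (rule of_nat_ceiling)
  then have "2 powr log 2 (dim_threshold e t) \<le> 2 powr real (log_threshold e t)"
    by simp
  then show "dim_threshold e t \<le> 2 ^ log_threshold e t"
    using X by (simp add: powr_realpow)
  have "real (log_threshold e t) = of_int \<lceil>log 2 (dim_threshold e t)\<rceil>"
    using X unfolding log_threshold_def by simp
  also have "\<dots> \<le> log 2 (dim_threshold e t) + 1"
    by (rule of_int_ceiling_le_add_one)
  finally show "real (log_threshold e t) \<le> log 2 (dim_threshold e t) + 1" .
qed

lemma one_minus_quarter_power_num_blocks_le:
  assumes "0 < e" "e < 1"
  shows "(1 - e / 4) ^ num_blocks e \<le> 1 / 8"
proof -
  have "(1 - e / 4) ^ num_blocks e \<le> exp (- (e / 4)) ^ num_blocks e"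
    using assms exp_ge_add_one_self[of "- (e / 4)"] by (intro power_mono) auto
  also have "\<dots> = exp (- (real (num_blocks e) * e / 4))"
    by (simp flip: exp_of_nat_mult)
  also have "\<dots> \<le> exp (- 3)"
    using num_blocks_bounds(1)[OF assms] assms by (simp add: field_simps)
  also have "\<dots> \<le> 1 / 8"
  proof -
    have "(2::real) ^ 3 \<le> exp 1 ^ 3"
      using exp_ge_add_one_self[of 1] by (intro power_mono) auto
    then have "8 \<le> exp (3::real)"
      by (simp flip: exp_of_nat_mult)
    then show ?thesis
      by (simp add: exp_minus field_simps)
  qed
  finally show ?thesis .
qed

lemma block_length_le:
  assumes "0 < e" "e < 1"
  shows "real (block_dim e t + 2) \<le> 16229 * (1 + ln ((real t + 1) / e))"
proof -
  define L where "L = ln ((real t + 1) / e)"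
  have L: "ln (1 / e) \<le> L" "0 \<le> ln (1 / e)"
    unfolding L_def using assms by (auto intro!: ln_mono simp: field_simps)
  have "ln (dim_threshold e t) = ln (4056 * ((real t + 1) / e) * (1 / e))"
    by (simp add: dim_threshold_def power2_eq_square)
  also have "\<dots> = ln 4056 + L + ln (1 / e)"
    using assms unfolding L_def by (simp only: ln_mult_pos mult_pos_pos divide_pos_pos)
  also have "\<dots> \<le> 4055 + 2 * L"
    using ln_le_minus_one[of "4056::real"] L by simp
  finally have "ln (dim_threshold e t) \<le> 4055 + 2 * L" .
  moreover have "log 2 (dim_threshold e t) \<le> 2 * ln (dim_threshold e t)"
  proof -
    have "1 \<le> 2 * ln (2::real)"
      using ln_le_minus_one[of "1 / 2 :: real"] by (simp add: ln_div)
    moreover have "0 \<le> ln (dim_threshold e t)"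
      using dim_threshold_ge_1[OF assms] by simp
    ultimately have "ln (dim_threshold e t) \<le> 2 * ln 2 * ln (dim_threshold e t)"
      using mult_right_mono[of 1 "2 * ln 2" "ln (dim_threshold e t)"] by simp
    then show ?thesis
      by (simp add: log_def divide_le_eq mult_ac)
  qed
  ultimately show ?thesis
    using log_threshold_bounds(2)[OF assms, of t] L by (simp add: block_dim_def L_def)
qed

lemma num_queries_le:
  assumes "0 < e" "e < 1"
  shows "real (num_blocks e * (block_dim e t + 2)) \<le> 211029 * (1 / e) * (1 + ln ((real t + 1) / e))"
proof -
  have "1 \<le> (real t + 1) / e"
    using assms by (simp add: field_simps)
  then have "0 \<le> 1 + ln ((real t + 1) / e)"
    by (simp add: add_nonneg_nonneg)
  then have "real (num_blocks e) * real (block_dim e t + 2) \<le> (13 / e) * (16229 * (1 + ln ((real t + 1) / e)))"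
    using assms by (intro mult_mono num_blocks_bounds(2) block_length_le) auto
  also have "\<dots> \<le> 211029 * (1 / e) * (1 + ln ((real t + 1) / e))"
    using assms \<open>0 \<le> 1 + ln ((real t + 1) / e)\<close> by (simp add: field_simps)
  finally show ?thesis
    by (simp only: of_nat_mult)
qed

lemma linear_le_exp: "real (2 * n + 7) \<le> 64 * (2::real) ^ n"
proof -
  have "2 * n + 7 \<le> 64 * (2::nat) ^ n"
    using less_exp[of n] one_le_power[of "2::nat" n] by linarith
  then have "real (2 * n + 7) \<le> real (64 * 2 ^ n)"
    by (rule of_nat_mono)
  then show ?thesis
    by simp
qed

lemma hit_prob_bound_second_term_le:
  assumes "0 < e" "e < 1"
  shows "real (num_blocks e) * (real t * real (num_blocks e * (block_dim e t + 2))) / 2 ^ block_dim e t \<le> 1 / 12"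
proof -
  define m where "m = real (num_blocks e)"
  define n where "n = log_threshold e t"
  have m: "0 \<le> m" "m \<le> 13 / e"
    using num_blocks_bounds(2)[OF assms] by (auto simp: m_def)
  have "24 * (m * (real t * (m * real (block_dim e t + 2))))
      = 24 * (m * m) * real (2 * n + 7) * real t"
    by (simp add: block_dim_def n_def algebra_simps)
  also have "\<dots> \<le> 24 * ((13 / e) * (13 / e)) * real (2 * n + 7) * (real t + 1)"
    using m assms by (intro mult_mono mult_left_mono) auto
  also have "\<dots> = dim_threshold e t * real (2 * n + 7)"
    using assms by (simp add: dim_threshold_def field_simps power2_eq_square)
  also have "\<dots> \<le> 2 ^ n * (64 * 2 ^ n)"
    using log_threshold_bounds(1)[OF assms, of t] linear_le_exp[of n] dim_threshold_ge_1[OF assms, of t]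
    by (intro mult_mono) (auto simp: n_def)
  also have "\<dots> = 2 * 2 ^ block_dim e t"
    by (simp add: block_dim_def n_def power_add power_even_eq power2_eq_square)
  finally show ?thesis
    by (simp add: m_def field_simps)
qed

lemma queries_squared_le:
  fixes C c0 e t u Q L :: real
  assumes C: "0 < C" "c0 = 1 / (7 * C)" and e: "0 < e" and t: "1 \<le> t" "t \<le> c0 * e * u"
    and u: "1 \<le> u" and Q: "0 \<le> Q" "Q \<le> C * (1 / e) * (1 + L)" and L: "L \<le> u"
  shows "Q * t * Q \<le> u ^ 4 / 12"
proof -
  have c0: "0 < c0"
    using C by simp
  have inv_e: "1 / e \<le> c0 * u"
    using t e by (simp add: field_simps)
  have "Q \<le> C * (1 / e) * (2 * u)"
    using Q(2) L u C e by (smt (verit) mult_left_mono divide_pos_pos mult_pos_pos)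
  then have "Q * Q * t \<le> (C * (1 / e) * (2 * u)) * (C * (1 / e) * (2 * u)) * (c0 * e * u)"
    using Q(1) t C e u by (intro mult_mono) auto
  also have "\<dots> = 4 * C * C * c0 * u * u * u * (1 / e)"
    using e by (simp add: field_simps)
  also have "\<dots> \<le> 4 * C * C * c0 * u * u * u * (c0 * u)"
    using inv_e C c0 u by (intro mult_left_mono) auto
  also have "\<dots> = (4 / 49) * u ^ 4"
    unfolding C(2) using C by (simp add: field_simps power4_eq_xxxx)
  also have "\<dots> \<le> u ^ 4 / 12"
    by simp
  finally show ?thesis
    by (simp add: mult_ac)
qed

lemma ln_two_mult_le: "1 \<le> u \<Longrightarrow> ln (2 * u) \<le> (u::real)"
  using ln_le_minus_one[of u] ln_2_less_1 by (simp add: ln_mult)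

lemma hit_prob_bound_first_term_le:
  assumes e: "0 < e" "e < 1"
    and t: "real t \<le> 1 / 1477203 * e powr (5 / 4) * 2 powr (real d / 4)"
  shows "real (num_blocks e * (block_dim e t + 2)) * (real t * real (num_blocks e * (block_dim e t + 2))) / 2 ^ d
           \<le> 1 / 12"
proof (cases "t = 0")
  case False
  define u where "u = 2 powr (real d / 4)"
  define Q where "Q = real (num_blocks e * (block_dim e t + 2))"
  have u: "1 \<le> u"
    unfolding u_def by (rule ge_one_powr_ge_zero) auto
  have u4: "u ^ 4 = 2 ^ d"
    unfolding u_def by (simp add: powr_realpow[symmetric] powr_powr flip: powr_power)
  have "e powr (5 / 4) \<le> e"
    using e by (intro powr_le_one_le) auto
  then have "1 / 1477203 * e powr (5 / 4) * u \<le> 1 / 1477203 * e * u"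
    using u by (intro mult_right_mono mult_left_mono) auto
  then have tu: "real t \<le> 1 / 1477203 * e * u"
    using t unfolding u_def by linarith
  have "real t + 1 \<le> 2 * u * e"
    using tu e u False by (simp add: field_simps)
  then have "(real t + 1) / e \<le> 2 * u"
    using e by (simp add: field_simps)
  then have "ln ((real t + 1) / e) \<le> ln (2 * u)"
    using e by (intro ln_mono) auto
  then have "ln ((real t + 1) / e) \<le> u"
    using ln_two_mult_le[OF u] by linarith
  then have "Q * real t * Q \<le> u ^ 4 / 12"
    using e False u tu num_queries_le[OF e, of t]
    by (intro queries_squared_le[of 211029 "1 / 1477203" e "real t" u Q "ln ((real t + 1) / e)"])
       (auto simp: Q_def)
  then show ?thesis
    using u4 by (simp add: Q_def field_simps)
qed simp

lemma hit_prob_bound_le: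
  assumes "0 < e" "e < 1" "real t \<le> 1 / 1477203 * e powr (5 / 4) * 2 powr (real d / 4)"
  shows "hit_prob_bound d t (num_blocks e) (block_dim e t) \<le> 1 / 6"
proof -
  define Q where "Q = real (num_blocks e * (block_dim e t + 2))"
  have "hit_prob_bound d t (num_blocks e) (block_dim e t)
      = Q * (real t * Q) / 2 ^ d + real (num_blocks e) * (real t * Q) / 2 ^ block_dim e t"
    by (simp add: hit_prob_bound_def Q_def field_simps)
  also have "\<dots> \<le> 1 / 12 + 1 / 12"
    unfolding Q_def by (intro add_mono hit_prob_bound_first_term_le[OF assms] hit_prob_bound_second_term_le[OF assms(1,2)])
  finally show ?thesis
    by simp
qed

lemma tester_queries:
  assumes "0 < e" "e < 1" "(qs, dec) \<in> set_pmf (tester d (num_blocks e) (block_dim e t))"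
  shows "set qs \<subseteq> cube d" "real (length qs) \<le> 211029 * (1 / e) * (1 + ln ((real t + 1) / e))"
  using tester_queries_in_support[OF assms(3)] num_queries_le[OF assms(1,2), of t] by simp_all

lemma tester_complete:
  assumes "0 < e" "e < 1" "real t \<le> 1 / 1477203 * e powr (5 / 4) * 2 powr (real d / 4)"
    and "valid_adversary d t adv" "linear_fn d f"
  shows "2 / 3 \<le> accept_prob (tester d (num_blocks e) (block_dim e t)) adv f"
  using accept_prob_tester_ge_if_linear[OF assms(5,4), where m="num_blocks e" and k="block_dim e t"]
    hit_prob_bound_le[OF assms(1-3)]
  by linarith

lemma tester_sound:
  assumes e: "0 < e" "e < 1" and t: "real t \<le> 1 / 1477203 * e powr (5 / 4) * 2 powr (real d / 4)"
    and "valid_adversary d t adv" "eps_far_linear d e f"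
  shows "2 / 3 \<le> 1 - accept_prob (tester d (num_blocks e) (block_dim e t)) adv f"
proof -
  have "1 \<le> block_dim e t"
    by (simp add: block_dim_def)
  then have "accept_prob (tester d (num_blocks e) (block_dim e t)) adv f
      \<le> hit_prob_bound d t (num_blocks e) (block_dim e t) + (1 - e / 4) ^ num_blocks e"
    using e by (intro accept_prob_tester_le_if_far[OF assms(5) _ _ _ assms(4)]) auto
  then show ?thesis
    using hit_prob_bound_le[OF e t] one_minus_quarter_power_num_blocks_le[OF e] by linarith
qed

theorem corollary5p1:
  shows "\<exists>c0::real. 0 < c0 \<and> c0 < 1 \<and> (\<exists>C::real. 0 < C \<and>
    (\<exists>T :: nat \<Rightarrow> real \<Rightarrow> nat \<Rightarrow> (bool list list \<times> (bool list \<Rightarrow> bool)) pmf.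
      \<forall>d \<epsilon> t. 0 < \<epsilon> \<and> \<epsilon> < 1 \<and> real t \<le> c0 * \<epsilon> powr (5/4) * 2 powr (real d / 4) \<longrightarrow>
        (\<forall>(qs, dec) \<in> set_pmf (T d \<epsilon> t).
            set qs \<subseteq> cube d \<and>
            real (length qs) \<le> C * (1 / \<epsilon>) * (1 + ln ((real t + 1) / \<epsilon>))) \<and>
        (\<forall>adv f. valid_adversary d t adv \<longrightarrow>
            (linear_fn d f \<longrightarrow> accept_prob (T d \<epsilon> t) adv f \<ge> 2/3) \<and>
            (eps_far_linear d \<epsilon> f \<longrightarrow> 1 - accept_prob (T d \<epsilon> t) adv f \<ge> 2/3))))"
proof -
  let ?T = "\<lambda>d e t. tester d (num_blocks e) (block_dim e t)"
  have main: "(\<forall>(qs, dec) \<in> set_pmf (?T d e t).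
            set qs \<subseteq> cube d \<and> real (length qs) \<le> 211029 * (1 / e) * (1 + ln ((real t + 1) / e))) \<and>
        (\<forall>adv f. valid_adversary d t adv \<longrightarrow>
            (linear_fn d f \<longrightarrow> accept_prob (?T d e t) adv f \<ge> 2/3) \<and>
            (eps_far_linear d e f \<longrightarrow> 1 - accept_prob (?T d e t) adv f \<ge> 2/3))"
    if "0 < e" "e < 1" "real t \<le> 1 / 1477203 * e powr (5/4) * 2 powr (real d / 4)" for d e t
    using tester_queries[OF that(1,2)] tester_complete[OF that] tester_sound[OF that] by blast
  show ?thesis
    by (rule exI[of _ "1 / 1477203"], rule conjI, simp, rule conjI, simp,
        rule exI[of _ 211029], rule conjI, simp, rule exI[of _ ?T], intro allI impI, elim conjE)
       (rule main)
qed

end
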